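(* Suppose Assumptions 1 and 2 hold and run Algorithm 1 with any $\gamma,\alpha>0$. For every $t\in\{1,2,\ldots\}$, if $$\|\mathbf{Q}(t)\|>\gamma G+\frac{\alpha R^2+2DR+2\gamma^2G^2}{\gamma\epsilon},$$ then $\|\mathbf{Q}(t+1)\|<\|\mathbf{Q}(t)\|$.
   Context: Setting: $n,m$ positive integers; $\mathcal{X}_0\subset\mathbb{R}^n$ is a nonempty compact convex set; $\mathbf{g}=(g_1,\ldots,g_m)^{\mathsf T}:\mathbb{R}^n\to\mathbb{R}^m$ with each $g_k$ convex and continuous; $f^t$, $t=0,1,2,\ldots$, are convex differentiable real functions on (a neighborhood of) $\mathcal{X}_0$. All norms are Euclidean. Assumption 1: there are constants $D,\beta,G,R>0$ with $\|\nabla f^t(\mathbf{x})\|\le D$ for all $\mathbf{x}\in\mathcal{X}_0$ and all $t\ge0$; $\|\mathbf{g}(\mathbf{x})-\mathbf{g}(\mathbf{y})\|\le\beta\|\mathbf{x}-\mathbf{y}\|$ for all $\mathbf{x},\mathbf{y}\in\mathcal{X}_0$; $\|\mathbf{g}(\mathbf{x})\|\le G$ for all $\mathbf{x}\in\mathcal{X}_0$; $\|\mathbf{x}-\mathbf{y}\|\le R$ for all $\mathbf{x},\mathbf{y}\in\mathcal{X}_0$. Assumption 2 (Slater condition): there exist $\epsilon>0$ and $\hat{\mathbf{x}}\in\mathcal{X}_0$ with $g_k(\hat{\mathbf{x}})\le-\epsilon$ for all $k\in\{1,\ldots,m\}$. Algorithm 1 (parameters $\gamma>0,\alpha>0$):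 let $\tilde{\mathbf{g}}(\mathbf{x})=\gamma\mathbf{g}(\mathbf{x})$. Choose any $\mathbf{x}(0)\in\mathcal{X}_0$ and set $Q_k(0)=0$ for all $k$. For each $t=0,1,2,\ldots$: set $Q_k(t+1)=\max\{-\tilde g_k(\mathbf{x}(t)),\,Q_k(t)+\tilde g_k(\mathbf{x}(t))\}$ for $k=1,\ldots,m$, and let $\mathbf{x}(t+1)$ be a minimizer over $\mathbf{x}\in\mathcal{X}_0$ of $[\nabla f^t(\mathbf{x}(t))]^{\mathsf T}(\mathbf{x}-\mathbf{x}(t))+[\mathbf{Q}(t+1)+\tilde{\mathbf{g}}(\mathbf{x}(t))]^{\mathsf T}\tilde{\mathbf{g}}(\mathbf{x})+\alpha\|\mathbf{x}-\mathbf{x}(t)\|^2$, where $\mathbf{Q}(t)=(Q_1(t),\ldots,Q_m(t))^{\mathsf T}$. *)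

theory Defs
  imports "HOL-Analysis.Analysis"
begin

end

theory Submission
  imports Defs
begin

text \<open>Lyapunov drift argument. The update \<open>Q' = max (-a) (Q + a)\<close> gives
  \<open>\<parallel>Q'\<parallel>\<^sup>2 \<le> \<parallel>Q\<parallel>\<^sup>2 + 2 Q\<bullet>a + 2\<parallel>a\<parallel>\<^sup>2\<close>. Comparing the proximal step that produced \<open>x(t)\<close>
  with the Slater point \<open>x\<^sub>h\<close> bounds \<open>Q(t)\<bullet>a\<close> by a constant minus \<open>\<gamma>\<epsilon>\<parallel>Q(t)\<parallel>\<close>, because the
  weight \<open>Q(t) + \<gamma>g(x(t-1))\<close> in that step is componentwise nonnegative. Above the
  threshold the negative term dominates, so the drift is negative. Only the bounds \<open>D, G, R\<close>,
  the Slater point and the optimality of \<open>x(t)\<close> are needed.\<close>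

lemma max_neg_add_sq_le:
  fixes q a :: real
  shows "(max (- a) (q + a))\<^sup>2 \<le> q\<^sup>2 + 2 * q * a + 2 * a\<^sup>2"
proof -
  have "0 \<le> (q + a)\<^sup>2" by simp
  then show ?thesis by (auto simp: max_def power2_eq_square algebra_simps)
qed

lemma norm_queue_update_sq_le:
  fixes Q Q' a :: "real ^ 'm"
  assumes upd: "\<And>k. Q' $ k = max (- a $ k) (Q $ k + a $ k)"
  shows "(norm Q')\<^sup>2 \<le> (norm Q)\<^sup>2 + 2 * (Q \<bullet> a) + 2 * (norm a)\<^sup>2"
proof -
  have "(norm Q')\<^sup>2 = (\<Sum>k\<in>UNIV. (Q' $ k)\<^sup>2)"
    unfolding power2_norm_eq_inner inner_vec_def by (simp add: power2_eq_square)
  also have "\<dots> \<le> (\<Sum>k\<in>UNIV. (Q $ k)\<^sup>2 + 2 * Q $ k * a $ k + 2 * (a $ k)\<^sup>2)"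
    unfolding upd by (intro sum_mono max_neg_add_sq_le)
  also have "\<dots> = (norm Q)\<^sup>2 + 2 * (Q \<bullet> a) + 2 * (norm a)\<^sup>2"
    unfolding power2_norm_eq_inner inner_vec_def
    by (simp add: sum.distrib sum_distrib_left power2_eq_square mult.assoc)
  finally show ?thesis .
qed

text \<open>The \<open>\<ell>\<^sub>1\<close> norm of a nonnegative vector dominates its Euclidean norm.\<close>

lemma inner_le_neg_norm_of_nonneg:
  fixes w v :: "real ^ 'm"
  assumes w: "\<And>k. 0 \<le> w $ k" and v: "\<And>k. v $ k \<le> - c" and c: "0 \<le> c"
  shows "w \<bullet> v \<le> - c * norm w"
proof -
  have "w \<bullet> v = (\<Sum>k\<in>UNIV. w $ k * v $ k)"
    unfolding inner_vec_def by simp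
  also have "\<dots> \<le> (\<Sum>k\<in>UNIV. w $ k * - c)"
    using w v by (intro sum_mono mult_left_mono)
  also have "\<dots> = - c * (\<Sum>k\<in>UNIV. \<bar>w $ k\<bar>)"
    using w by (simp add: sum_distrib_left mult.commute)
  also have "\<dots> \<le> - c * norm w"
    using norm_le_l1_cart[of w] c by (intro mult_left_mono_neg) auto
  finally show ?thesis .
qed

lemma inner_queue_le_of_proximal_step:
  fixes Q b a v :: "real ^ 'm" and d y y' z :: "real ^ 'n"
  assumes step: "d \<bullet> (y' - y) + (Q + b) \<bullet> a + \<alpha> * (norm (y' - y))\<^sup>2
                  \<le> d \<bullet> (z - y) + (Q + b) \<bullet> v + \<alpha> * (norm (z - y))\<^sup>2"
    and weight_nonneg: "\<And>k. 0 \<le> (Q + b) $ k"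
    and slater: "\<And>k. v $ k \<le> - c" "0 \<le> c"
    and bounds: "norm d \<le> D" "norm (y' - y) \<le> R" "norm (z - y) \<le> R"
      "norm a \<le> M" "norm b \<le> M" "0 \<le> \<alpha>"
  shows "Q \<bullet> a \<le> \<alpha> * R\<^sup>2 + 2 * D * R + M\<^sup>2 + c * M - c * norm Q"
proof -
  have DR: "norm d * norm (y' - y) \<le> D * R" "norm d * norm (z - y) \<le> D * R"
    using bounds by (auto intro!: mult_mono order.trans[OF norm_ge_zero])
  have "- (d \<bullet> (y' - y)) \<le> D * R"
    using norm_cauchy_schwarz[of "- d" "y' - y"] DR by simp
  moreover have "d \<bullet> (z - y) \<le> D * R"
    using norm_cauchy_schwarz[of d "z - y"] DR by simp
  moreover have "\<alpha> * (norm (z - y))\<^sup>2 \<le> \<alpha> * R\<^sup>2"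
    using bounds by (intro mult_left_mono power_mono) auto
  moreover have "0 \<le> \<alpha> * (norm (y' - y))\<^sup>2"
    using bounds by simp
  moreover have "- (b \<bullet> a) \<le> M\<^sup>2"
  proof -
    have "norm b * norm a \<le> M * M"
      using bounds by (auto intro!: mult_mono order.trans[OF norm_ge_zero])
    then show ?thesis
      using norm_cauchy_schwarz[of "- b" a] by (simp add: power2_eq_square)
  qed
  moreover have "(Q + b) \<bullet> v \<le> - c * (norm Q - M)"
  proof -
    have "norm Q - M \<le> norm (Q + b)"
      using norm_triangle_ineq4[of "Q + b" b] bounds by simp
    then have "- c * norm (Q + b) \<le> - c * (norm Q - M)"
      using slater by (intro mult_left_mono_neg) auto
    with inner_le_neg_norm_of_nonneg[OF weight_nonneg slater] show ?thesis
      by linarith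
  qed
  ultimately show ?thesis
    using step by (simp add: inner_add_left algebra_simps)
qed

theorem lemma9:
  fixes X0 :: "(real ^ 'n) set"
    and g :: "real ^ 'n \<Rightarrow> real ^ 'm"
    and f :: "nat \<Rightarrow> real ^ 'n \<Rightarrow> real"
    and df :: "nat \<Rightarrow> real ^ 'n \<Rightarrow> real ^ 'n"
    and U :: "(real ^ 'n) set"
    and D \<beta> G R \<epsilon> \<gamma> \<alpha> :: real
    and xh :: "real ^ 'n"
    and x :: "nat \<Rightarrow> real ^ 'n"
    and Q :: "nat \<Rightarrow> real ^ 'm"
  assumes X0: "X0 \<noteq> {}" "compact X0" "convex X0"
    and g_convex: "\<And>k. convex_on UNIV (\<lambda>y. g y $ k)"
    and g_cont: "continuous_on UNIV g"
    and U: "open U" "convex U" "X0 \<subseteq> U"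
    and f_convex: "\<And>t. convex_on U (f t)"
    and f_grad: "\<And>t y. y \<in> U \<Longrightarrow> GDERIV (f t) y :> df t y"
    and pos: "D > 0" "\<beta> > 0" "G > 0" "R > 0"
    and A1_D: "\<And>t y. y \<in> X0 \<Longrightarrow> norm (df t y) \<le> D"
    and A1_beta: "\<And>y z. y \<in> X0 \<Longrightarrow> z \<in> X0 \<Longrightarrow> norm (g y - g z) \<le> \<beta> * norm (y - z)"
    and A1_G: "\<And>y. y \<in> X0 \<Longrightarrow> norm (g y) \<le> G"
    and A1_R: "\<And>y z. y \<in> X0 \<Longrightarrow> z \<in> X0 \<Longrightarrow> norm (y - z) \<le> R"
    and slater: "\<epsilon> > 0" "xh \<in> X0" "\<And>k. g xh $ k \<le> - \<epsilon>"
    and params: "\<gamma> > 0" "\<alpha> > 0"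
    and x0: "x 0 \<in> X0"
    and Q0: "Q 0 = 0"
    and Q_upd: "\<And>t k. Q (Suc t) $ k = max (- (\<gamma> * g (x t) $ k)) (Q t $ k + \<gamma> * g (x t) $ k)"
    and x_mem: "\<And>t. x (Suc t) \<in> X0"
    and x_min: "\<And>t y. y \<in> X0 \<Longrightarrow>
        df t (x t) \<bullet> (x (Suc t) - x t) + (Q (Suc t) + \<gamma> *\<^sub>R g (x t)) \<bullet> (\<gamma> *\<^sub>R g (x (Suc t)))
          + \<alpha> * (norm (x (Suc t) - x t))\<^sup>2
        \<le> df t (x t) \<bullet> (y - x t) + (Q (Suc t) + \<gamma> *\<^sub>R g (x t)) \<bullet> (\<gamma> *\<^sub>R g y)
          + \<alpha> * (norm (y - x t))\<^sup>2"
  shows "\<forall>t\<ge>1. norm (Q t) > \<gamma> * G + (\<alpha> * R\<^sup>2 + 2 * D * R + 2 * \<gamma>\<^sup>2 * G\<^sup>2) / (\<gamma> * \<epsilon>)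
           \<longrightarrow> norm (Q (Suc t)) < norm (Q t)"
proof (intro allI impI)
  fix t :: nat
  assume "t \<ge> 1"
    and above: "norm (Q t) > \<gamma> * G + (\<alpha> * R\<^sup>2 + 2 * D * R + 2 * \<gamma>\<^sup>2 * G\<^sup>2) / (\<gamma> * \<epsilon>)"
  then obtain s where ts: "t = Suc s" by (cases t) auto
  have xX: "x n \<in> X0" for n using x0 x_mem by (cases n) auto
  have scaled_G: "norm (\<gamma> *\<^sub>R g (x n)) \<le> \<gamma> * G" for n
    using A1_G[OF xX] params by (simp add: mult_left_mono)
  have slater_scaled: "(\<gamma> *\<^sub>R g xh) $ k \<le> - (\<gamma> * \<epsilon>)" for k
    using mult_left_mono[OF slater(3) less_imp_le[OF params(1)]] by simp
  have "Q t \<bullet> (\<gamma> *\<^sub>R g (x t)) \<le> \<alpha> * R\<^sup>2 + 2 * D * R + (\<gamma> * G)\<^sup>2 + \<gamma> * \<epsilon> * (\<gamma> * G)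
        - \<gamma> * \<epsilon> * norm (Q t)"
    unfolding ts
  proof (rule inner_queue_le_of_proximal_step[OF x_min[OF slater(2)] _ slater_scaled])
    show "0 \<le> (Q (Suc s) + \<gamma> *\<^sub>R g (x s)) $ k" for k
      by (simp add: Q_upd max_def)
  qed (use A1_D A1_R xX slater scaled_G params in auto)
  moreover have "(norm (\<gamma> *\<^sub>R g (x t)))\<^sup>2 \<le> (\<gamma> * G)\<^sup>2"
    using scaled_G by (intro power_mono) auto
  moreover have "\<gamma> * \<epsilon> * (\<gamma> * G) + (\<alpha> * R\<^sup>2 + 2 * D * R + 2 * \<gamma>\<^sup>2 * G\<^sup>2) < \<gamma> * \<epsilon> * norm (Q t)"
    using above params slater(1) by (simp add: field_simps)
  ultimately have "(norm (Q (Suc t)))\<^sup>2 < (norm (Q t))\<^sup>2"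
    using norm_queue_update_sq_le[of "Q (Suc t)" "\<gamma> *\<^sub>R g (x t)" "Q t"] Q_upd
    by (simp add: power_mult_distrib algebra_simps)
  then show "norm (Q (Suc t)) < norm (Q t)"
    using power_less_imp_less_base by fastforce
qed

end
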